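(* Let $E=(E^0,E^1,r,s)$ be a graph and $H\subseteq E^0$ a saturated hereditary subset. Then $|\widetilde{\partial}E|=|\widetilde{\partial}\,\overline{E}_{(H,\emptyset)}|+|\widetilde{\partial}\,(E\setminus(H,\emptyset))|$.
   Context: A graph $E=(E^0,E^1,r,s)$ has vertex set $E^0$, edge set $E^1$, range and source maps; no countability assumed. A vertex is singular if it emits no edges or infinitely many edges, regular otherwise. Boundary paths $\partial E$: infinite paths $e_1e_2\cdots$ ($r(e_i)=s(e_{i+1})$) together with finite paths (including vertices as length-$0$ paths) whose range is singular. The shift $\sigma_E$ removes the first edge (fixes vertices; sends a single edge $e$ to $r(e)$); $\alpha,\beta\in\partial E$ are shift-tail equivalent if $\sigma_E^m(\alpha)=\sigma_E^n(\beta)$ for some $m,n\in\mathbb{N}$, and $\widetilde{\partial}E$ is the set of shift-tail equivalence classes. $H\subseteq E^0$ is hereditary if $s(e)\in H\Rightarrow r(e)\in H$; saturated if every regular $v$ with $r(s^{-1}(v))\subseteq H$ lies in $H$. Breaking vertices: $B_H=\{v\in E^0\text{ singular}:0<|s^{-1}(v)\cap r^{-1}(E^0\setminus H)|<\infty\}$. The graph $E\setminus(H,\emptyset)$ has vertex set $(E^0\setminus H)\sqcup\{w_v:v\in B_H\}$ and edge set $(E^1\setminus r^{-1}(H))\sqcup\{f_e:e\in E^1,\ r(e)\in B_H\}$, with $r,s$ as in $E$ on the old edges, and $s(f_e)=s(e)$, $r(f_e)=w_{r(e)}$. Let $F_1(H,\emptyset)=\{\alpha=e_1\cdots e_n\in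 E^*: n\ge1,\ r(e_n)\in H,\ s(e_n)\notin H\}$ and let $\overline{F}_1(H,\emptyset)=\{\overline{\alpha}:\alpha\in F_1(H,\emptyset)\}$ be a disjoint copy. The graph $\overline{E}_{(H,\emptyset)}$ has vertex set $H\sqcup F_1(H,\emptyset)$ and edge set $\{e\in E^1:s(e)\in H\}\sqcup\overline{F}_1(H,\emptyset)$, with $r,s$ as in $E$ on the edges from $E$, and $s(\overline{\alpha})=\alpha$, $r(\overline{\alpha})=r(\alpha)$. *)

theory Defs
  imports Main "HOL-Library.Equipollence"
begin

record ('v, 'e) dgraph =
  verts :: "'v set"
  edges :: "'e set"
  rng   :: "'e \<Rightarrow> 'v"
  src   :: "'e \<Rightarrow> 'v"

definition wf_graph :: "('v, 'e) dgraph \<Rightarrow> bool" where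
  "wf_graph E \<longleftrightarrow> (\<forall>e\<in>edges E. rng E e \<in> verts E \<and> src E e \<in> verts E)"

definition emits :: "('v, 'e) dgraph \<Rightarrow> 'v \<Rightarrow> 'e set" where
  "emits E v = {e \<in> edges E. src E e = v}"

definition singular :: "('v, 'e) dgraph \<Rightarrow> 'v \<Rightarrow> bool" where
  "singular E v \<longleftrightarrow> v \<in> verts E \<and> (emits E v = {} \<or> infinite (emits E v))"

definition regular :: "('v, 'e) dgraph \<Rightarrow> 'v \<Rightarrow> bool" where
  "regular E v \<longleftrightarrow> v \<in> verts E \<and> \<not> singular E v"

definition fin_path :: "('v, 'e) dgraph \<Rightarrow> 'e list \<Rightarrow> bool" where
  "fin_path E es \<longleftrightarrow> es \<noteq> [] \<and> set es \<subseteq> edges E \<and>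
     (\<forall>i. Suc i < length es \<longrightarrow> rng E (es ! i) = src E (es ! Suc i))"

definition inf_path :: "('v, 'e) dgraph \<Rightarrow> (nat \<Rightarrow> 'e) \<Rightarrow> bool" where
  "inf_path E f \<longleftrightarrow> (\<forall>i. f i \<in> edges E \<and> rng E (f i) = src E (f (Suc i)))"

text \<open>Paths: vertices (length-0 paths), nonempty finite paths, infinite paths.\<close>
datatype ('v, 'e) bpath = PV 'v | PF "'e list" | PI "nat \<Rightarrow> 'e"

definition boundary :: "('v, 'e) dgraph \<Rightarrow> ('v, 'e) bpath set" where
  "boundary E =
     {PV v | v. singular E v}
   \<union> {PF es | es. fin_path E es \<and> singular E (rng E (last es))}
   \<union> {PI f | f. inf_path E f}"

fun shift :: "('v, 'e) dgraph \<Rightarrow> ('v, 'e) bpath \<Rightarrow> ('v, 'e) bpath" where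
  "shift E (PV v) = PV v"
| "shift E (PF []) = PF []"
| "shift E (PF [e]) = PV (rng E e)"
| "shift E (PF (e # e' # es)) = PF (e' # es)"
| "shift E (PI f) = PI (\<lambda>i. f (Suc i))"

definition shift_tail :: "('v, 'e) dgraph \<Rightarrow> (('v, 'e) bpath \<times> ('v, 'e) bpath) set" where
  "shift_tail E = {(a, b). a \<in> boundary E \<and> b \<in> boundary E \<and>
      (\<exists>m n. (shift E ^^ m) a = (shift E ^^ n) b)}"

definition boundary_classes :: "('v, 'e) dgraph \<Rightarrow> ('v, 'e) bpath set set" where
  "boundary_classes E = boundary E // shift_tail E"

definition hereditary :: "('v, 'e) dgraph \<Rightarrow> 'v set \<Rightarrow> bool" where
  "hereditary E H \<longleftrightarrow> H \<subseteq> verts E \<and> (\<forall>e\<in>edges E. src E e \<in> H \<longrightarrow> rng E e \<in> H)"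

definition saturated :: "('v, 'e) dgraph \<Rightarrow> 'v set \<Rightarrow> bool" where
  "saturated E H \<longleftrightarrow> (\<forall>v. regular E v \<and> rng E ` emits E v \<subseteq> H \<longrightarrow> v \<in> H)"

definition breaking :: "('v, 'e) dgraph \<Rightarrow> 'v set \<Rightarrow> 'v set" where
  "breaking E H = {v. singular E v \<and>
      {e \<in> emits E v. rng E e \<notin> H} \<noteq> {} \<and> finite {e \<in> emits E v. rng E e \<notin> H}}"

text \<open>Vertices: Inl v for v not in H, Inr v for the new vertex w_v (v a breaking vertex).
  Edges: Inl e for old edges with range outside H, Inr e for the new edge f_e.\<close>
definition quot_graph :: "('v, 'e) dgraph \<Rightarrow> 'v set \<Rightarrow> ('v + 'v, 'e + 'e) dgraph" where
  "quot_graph E H =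
     \<lparr> verts = Inl ` (verts E - H) \<union> Inr ` breaking E H,
       edges = Inl ` {e \<in> edges E. rng E e \<notin> H} \<union> Inr ` {e \<in> edges E. rng E e \<in> breaking E H},
       rng = (\<lambda>x. case x of Inl e \<Rightarrow> Inl (rng E e) | Inr e \<Rightarrow> Inr (rng E e)),
       src = (\<lambda>x. case x of Inl e \<Rightarrow> Inl (src E e) | Inr e \<Rightarrow> Inl (src E e)) \<rparr>"

definition F1 :: "('v, 'e) dgraph \<Rightarrow> 'v set \<Rightarrow> 'e list set" where
  "F1 E H = {\<alpha>. fin_path E \<alpha> \<and> rng E (last \<alpha>) \<in> H \<and> src E (last \<alpha>) \<notin> H}"

text \<open>Vertices: Inl v for v in H, Inr alpha for alpha in F1.
  Edges: Inl e for edges with source in H, Inr alpha for the copy alpha-bar.\<close>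
definition restr_graph :: "('v, 'e) dgraph \<Rightarrow> 'v set \<Rightarrow> ('v + 'e list, 'e + 'e list) dgraph" where
  "restr_graph E H =
     \<lparr> verts = Inl ` H \<union> Inr ` F1 E H,
       edges = Inl ` {e \<in> edges E. src E e \<in> H} \<union> Inr ` F1 E H,
       rng = (\<lambda>x. case x of Inl e \<Rightarrow> Inl (rng E e) | Inr \<alpha> \<Rightarrow> Inl (rng E (last \<alpha>))),
       src = (\<lambda>x. case x of Inl e \<Rightarrow> Inl (src E e) | Inr \<alpha> \<Rightarrow> Inr \<alpha>) \<rparr>"

end

(*
  Call a boundary path entering if it reaches H. Since H is hereditary, being entering is
  invariant under the shift, so the shift-tail classes of E split into those of entering and
  of non-entering paths. Each family is matched with the classes of one of the two graphs by a
  map of boundary paths that reflects shift-tail equivalence and is onto up to it.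

  The non-entering boundary paths of E are exactly the boundary paths of E minus (H, empty)
  with w_v and f_e renamed back to v and e. Saturation is what makes this work at vertices: a
  vertex outside H emitting no or infinitely many edges outside H cannot be regular in E, for
  then all of its edges would go into H and it would belong to H.

  An entering path has a shift lying inside H, which is a boundary path of E-bar; conversely
  a boundary path of E-bar lies inside H after one shift, which removes a possible first edge
  alpha-bar.
*)

theory Submission
  imports Defs
begin

section \<open>Equipollence of quotients\<close>

lemma quotient_eqpoll_quotient:
  assumes S: "equiv B S" and R: "equiv X R" and "A \<subseteq> X" and g: "g ` B \<subseteq> A"
    and g_iff: "\<And>b b'. b \<in> B \<Longrightarrow> b' \<in> B \<Longrightarrow> (g b, g b') \<in> R \<longleftrightarrow> (b, b') \<in> S"
    and g_onto: "\<And>a. a \<in> A \<Longrightarrow> \<exists>b\<in>B. (g b, a) \<in> R"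
  shows "B // S \<approx> A // R"
proof -
  define \<Phi> where "\<Phi> Y = R `` (g ` Y)" for Y
  have \<Phi>_class: "\<Phi> (S `` {b}) = R `` {g b}" if "b \<in> B" for b
  proof -
    have "(g b, g b') \<in> R" if "(b, b') \<in> S" for b'
      using g_iff that S \<open>b \<in> B\<close> by (auto simp: equiv_def refl_on_def)
    then show ?thesis
      using R S \<open>b \<in> B\<close> unfolding \<Phi>_def equiv_def refl_on_def trans_def by blast
  qed
  have gX: "g b \<in> X" if "b \<in> B" for b
    using that g \<open>A \<subseteq> X\<close> by blast
  have "inj_on \<Phi> (B // S)"
  proof (rule inj_onI)
    fix Y Z assume "Y \<in> B // S" "Z \<in> B // S" "\<Phi> Y = \<Phi> Z"
    then obtain y z where "y \<in> B" "z \<in> B" "Y = S `` {y}" "Z = S `` {z}" "R `` {g y} = R `` {g z}"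
      by (auto elim!: quotientE simp: \<Phi>_class)
    then show "Y = Z"
      using eq_equiv_class_iff[OF R gX gX] g_iff equiv_class_eq[OF S] by metis
  qed
  moreover have "\<Phi> ` (B // S) = A // R"
  proof
    show "\<Phi> ` (B // S) \<subseteq> A // R"
      using g by (auto elim!: quotientE simp: \<Phi>_class intro!: quotientI)
    show "A // R \<subseteq> \<Phi> ` (B // S)"
    proof
      fix Y assume "Y \<in> A // R"
      then obtain a where "a \<in> A" "Y = R `` {a}"
        by (auto elim!: quotientE)
      moreover obtain b where "b \<in> B" "(g b, a) \<in> R"
        using g_onto \<open>a \<in> A\<close> by blast
      ultimately have "Y = \<Phi> (S `` {b})"
        using equiv_class_eq[OF R] \<Phi>_class by simp
      then show "Y \<in> \<Phi> ` (B // S)"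
        using \<open>b \<in> B\<close> by (auto intro: quotientI)
    qed
  qed
  ultimately show ?thesis
    unfolding eqpoll_def bij_betw_def by blast
qed

lemma quotient_eqpoll_Plus_invariant:
  assumes R: "equiv X R" and P: "\<And>x y. (x, y) \<in> R \<Longrightarrow> P x \<longleftrightarrow> P y"
  shows "X // R \<approx> {x \<in> X. P x} // R <+> {x \<in> X. \<not> P x} // R"
proof -
  let ?A = "{x \<in> X. P x} // R" and ?B = "{x \<in> X. \<not> P x} // R"
  have split: "X // R = ?A \<union> ?B"
    unfolding quotient_def by blast
  have "?A \<inter> ?B = {}"
  proof (rule ccontr)
    assume "?A \<inter> ?B \<noteq> {}"
    then obtain a b where "a \<in> X" "P a" "b \<in> X" "\<not> P b" "R `` {a} = R `` {b}"
      by (auto simp: quotient_def)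
    then show False
      using eq_equiv_class_iff[OF R] P by blast
  qed
  then have "bij_betw (\<lambda>Y. if Y \<in> ?A then Inl Y else Inr Y) (?A \<union> ?B) (?A <+> ?B)"
    by (auto simp: bij_betw_def inj_on_def image_iff)
  then show ?thesis
    unfolding split eqpoll_def by blast
qed

section \<open>Boundary paths and the shift\<close>

lemma fin_path_singleton [simp]: "fin_path E [e] \<longleftrightarrow> e \<in> edges E"
  by (auto simp: fin_path_def)

lemma fin_path_Cons_Cons [simp]:
  "fin_path E (e # e' # es) \<longleftrightarrow> e \<in> edges E \<and> rng E e = src E e' \<and> fin_path E (e' # es)"
  unfolding fin_path_def by (auto simp: nth_Cons split: nat.splits)

lemma fin_path_Nil [simp]: "\<not> fin_path E []"
  by (simp add: fin_path_def)

lemma shift_in_boundary: "x \<in> boundary E \<Longrightarrow> shift E x \<in> boundary E"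
  by (cases "(E, x)" rule: shift.cases) (auto simp: boundary_def inf_path_def)

lemma funpow_shift_in_boundary: "x \<in> boundary E \<Longrightarrow> (shift E ^^ n) x \<in> boundary E"
  by (induction n) (auto intro: shift_in_boundary)

lemma funpow_shift_PF_length: "es \<noteq> [] \<Longrightarrow> (shift E ^^ length es) (PF es) = PV (rng E (last es))"
proof (induction es rule: induct_list012)
  case (3 e e' es)
  then show ?case by (simp only: length_Cons funpow_Suc_right comp_apply) simp
qed simp_all

lemma funpow_shift_PI: "(shift E ^^ i) (PI f) = PI (\<lambda>j. f (j + i))"
  by (induction i) auto

lemma equiv_shift_tail: "equiv (boundary E) (shift_tail E)"
proof (rule equivI)
  show "refl_on (boundary E) (shift_tail E)"
    unfolding refl_on_def shift_tail_def by (auto intro: exI[of _ 0])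
  show "sym (shift_tail E)"
    unfolding sym_def shift_tail_def by (auto dest: sym)
  show "trans (shift_tail E)"
  proof (rule transI)
    fix a b c assume "(a, b) \<in> shift_tail E" "(b, c) \<in> shift_tail E"
    then obtain m n p q where ab: "(shift E ^^ m) a = (shift E ^^ n) b"
      and bc: "(shift E ^^ p) b = (shift E ^^ q) c" and in_bd: "a \<in> boundary E" "c \<in> boundary E"
      by (auto simp: shift_tail_def)
    have "(shift E ^^ (p + m)) a = (shift E ^^ p) ((shift E ^^ n) b)"
      by (simp add: funpow_add ab)
    also have "\<dots> = (shift E ^^ n) ((shift E ^^ q) c)"
      by (metis bc add.commute funpow_add comp_apply)
    also have "\<dots> = (shift E ^^ (n + q)) c"
      by (simp add: funpow_add)
    finally show "(a, c) \<in> shift_tail E"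
      using in_bd by (auto simp: shift_tail_def)
  qed
qed (auto simp: shift_tail_def)

lemma shift_tail_funpow_shift: "x \<in> boundary E \<Longrightarrow> ((shift E ^^ k) x, x) \<in> shift_tail E"
  unfolding shift_tail_def by (auto intro: funpow_shift_in_boundary) (metis funpow_0)

lemma shift_tail_shift_iff:
  assumes "x \<in> boundary E" "y \<in> boundary E"
  shows "(shift E x, shift E y) \<in> shift_tail E \<longleftrightarrow> (x, y) \<in> shift_tail E"
proof -
  have "(\<exists>m n. (shift E ^^ m) (shift E x) = (shift E ^^ n) (shift E y))
        \<longleftrightarrow> (\<exists>m n. (shift E ^^ m) x = (shift E ^^ n) y)"
    by (metis funpow_Suc_right funpow_swap1 o_apply)
  then show ?thesis
    using assms by (simp add: shift_tail_def shift_in_boundary)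
qed

lemma shift_tail_transfer:
  assumes h_shift: "\<And>x. h (shift F x) = shift E (h x)" and inj: "inj_on h (boundary F)"
    and x: "x \<in> boundary F" "h x \<in> boundary E" and y: "y \<in> boundary F" "h y \<in> boundary E"
  shows "(h x, h y) \<in> shift_tail E \<longleftrightarrow> (x, y) \<in> shift_tail F"
proof -
  have h_funpow: "(shift E ^^ n) (h z) = h ((shift F ^^ n) z)" for n z
    by (induction n) (simp_all add: h_shift)
  have "h ((shift F ^^ m) x) = h ((shift F ^^ n) y) \<longleftrightarrow> (shift F ^^ m) x = (shift F ^^ n) y" for m n
    using inj_on_eq_iff[OF inj] funpow_shift_in_boundary x y by blast
  then show ?thesis
    using x y by (simp add: shift_tail_def h_funpow)
qed

fun enters :: "('v, 'e) dgraph \<Rightarrow> 'v set \<Rightarrow> ('v, 'e) bpath \<Rightarrow> bool" where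
  "enters E H (PV v) \<longleftrightarrow> v \<in> H"
| "enters E H (PF es) \<longleftrightarrow> rng E (last es) \<in> H"
| "enters E H (PI f) \<longleftrightarrow> (\<exists>i. src E (f i) \<in> H)"

lemma enters_shift:
  assumes her: "hereditary E H" and x: "x \<in> boundary E"
  shows "enters E H (shift E x) \<longleftrightarrow> enters E H x"
proof (cases "(E, x)" rule: shift.cases)
  case (5 E' f)
  then have "src E (f 0) \<in> H \<Longrightarrow> src E (f (Suc 0)) \<in> H"
    using x her by (auto simp: boundary_def inf_path_def hereditary_def)
  then show ?thesis
    using 5 by (auto, metis not0_implies_Suc)
qed auto

lemma enters_shift_tail:
  assumes "hereditary E H" and "(a, b) \<in> shift_tail E"
  shows "enters E H a \<longleftrightarrow> enters E H b"
proof -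
  have "enters E H ((shift E ^^ n) x) \<longleftrightarrow> enters E H x" if "x \<in> boundary E" for x n
    by (induction n) (simp_all add: enters_shift[OF assms(1)] funpow_shift_in_boundary that)
  moreover obtain m n where "a \<in> boundary E" "b \<in> boundary E" "(shift E ^^ m) a = (shift E ^^ n) b"
    using assms(2) by (auto simp: shift_tail_def)
  ultimately show ?thesis
    by metis
qed

lemma boundary_classes_split:
  "hereditary E H \<Longrightarrow> boundary_classes E \<approx>
     {a \<in> boundary E. enters E H a} // shift_tail E <+> {a \<in> boundary E. \<not> enters E H a} // shift_tail E"
  unfolding boundary_classes_def
  by (rule quotient_eqpoll_Plus_invariant[OF equiv_shift_tail enters_shift_tail])

lemma hereditary_fin_path_rng_notin:
  assumes "hereditary E H"
  shows "fin_path E es \<Longrightarrow> rng E (last es) \<notin> H \<Longrightarrow> \<forall>e\<in>set es. rng E e \<notin> H"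
proof (induction es rule: induct_list012)
  case (3 e e' es)
  then have "rng E e = src E e'" "fin_path E (e' # es)" "rng E e' \<notin> H"
    by simp_all
  then have "rng E e \<notin> H"
    using assms by (auto simp: hereditary_def fin_path_def)
  then show ?case
    using 3 by simp
qed auto

section \<open>The graph E minus (H, empty)\<close>

definition untag :: "'a + 'a \<Rightarrow> 'a" where
  "untag = case_sum id id"

lemma untag_simps [simp]: "untag (Inl a) = a" "untag (Inr a) = a"
  by (simp_all add: untag_def)

lemma quot_graph_simps [simp]:
  "verts (quot_graph E H) = Inl ` (verts E - H) \<union> Inr ` breaking E H"
  "edges (quot_graph E H) =
     Inl ` {e \<in> edges E. rng E e \<notin> H} \<union> Inr ` {e \<in> edges E. rng E e \<in> breaking E H}"
  "rng (quot_graph E H) (Inl e) = Inl (rng E e)"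
  "rng (quot_graph E H) (Inr e) = Inr (rng E e)"
  "src (quot_graph E H) x = Inl (src E (untag x))"
  by (auto simp: quot_graph_def split: sum.splits)

lemma untag_rng_quot [simp]: "untag (rng (quot_graph E H) x) = rng E (untag x)"
  by (cases x) simp_all

lemma rng_quot_eq_Inl_iff [simp]:
  "rng (quot_graph E H) x = Inl v \<longleftrightarrow> (\<exists>e. x = Inl e \<and> rng E e = v)"
  by (cases x) auto

lemma breaking_notin: "hereditary E H \<Longrightarrow> v \<in> breaking E H \<Longrightarrow> v \<notin> H"
  by (auto simp: breaking_def hereditary_def emits_def)

lemma singular_quot_Inr [simp]: "singular (quot_graph E H) (Inr v) \<longleftrightarrow> v \<in> breaking E H"
  by (auto simp: singular_def emits_def)

lemma saturated_imp_singular: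
  assumes "saturated E H" "v \<in> verts E" "v \<notin> H"
    and exits: "{e \<in> emits E v. rng E e \<notin> H} = {} \<or> infinite {e \<in> emits E v. rng E e \<notin> H}"
  shows "singular E v"
proof (rule ccontr)
  assume "\<not> singular E v"
  then have "regular E v" "finite (emits E v)"
    using assms(2) by (auto simp: regular_def singular_def)
  then have "rng E ` emits E v \<subseteq> H"
    using exits by auto
  then show False
    using assms(1,3) \<open>regular E v\<close> by (auto simp: saturated_def)
qed

lemma singular_quot_Inl:
  assumes "hereditary E H" "saturated E H"
  shows "singular (quot_graph E H) (Inl v) \<longleftrightarrow>
           v \<in> verts E \<and> v \<notin> H \<and> singular E v \<and> v \<notin> breaking E H"
proof -
  let ?N = "{e \<in> emits E v. rng E e \<notin> H}" and ?B = "{e \<in> emits E v. rng E e \<in> breaking E H}"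
  have emits_quot: "emits (quot_graph E H) (Inl v) = Inl ` ?N \<union> Inr ` ?B"
    by (auto simp: emits_def)
  have "?B \<subseteq> ?N"
    using breaking_notin[OF assms(1)] by auto
  then have "emits (quot_graph E H) (Inl v) = {} \<longleftrightarrow> ?N = {}"
    and "finite (emits (quot_graph E H) (Inl v)) \<longleftrightarrow> finite ?N"
    unfolding emits_quot by (auto intro: finite_subset dest: finite_imageD)
  then show ?thesis
    using saturated_imp_singular[OF assms(2), of v]
    by (auto simp: singular_def[of "quot_graph E H"] breaking_def)
qed

lemma singular_quot_untag:
  assumes "hereditary E H" "saturated E H" "singular (quot_graph E H) x"
  shows "singular E (untag x) \<and> untag x \<notin> H"
proof (cases x)
  case (Inl v)
  then show ?thesis
    using assms(3) singular_quot_Inl[OF assms(1,2)] by simp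
next
  case (Inr v)
  then have "v \<in> breaking E H"
    using assms(3) by simp
  then have "singular E v" "v \<notin> H"
    using breaking_notin[OF assms(1)] unfolding breaking_def by blast+
  then show ?thesis
    using Inr by simp
qed

lemma edge_quot_untag_notin:
  assumes "hereditary E H" "x \<in> edges (quot_graph E H)"
  shows "rng E (untag x) \<notin> H" "src E (untag x) \<notin> H"
proof -
  show "rng E (untag x) \<notin> H"
    using assms(2) by (auto dest: breaking_notin[OF assms(1)])
  then show "src E (untag x) \<notin> H"
    using assms by (auto simp: hereditary_def)
qed

lemma fin_path_untag: "fin_path (quot_graph E H) es \<Longrightarrow> fin_path E (map untag es)"
  unfolding fin_path_def by fastforce

lemma inf_path_untag:
  assumes "inf_path (quot_graph E H) f"
  shows "inf_path E (untag \<circ> f)"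
  unfolding inf_path_def
proof
  fix i
  have "f i \<in> edges (quot_graph E H)" "rng (quot_graph E H) (f i) = src (quot_graph E H) (f (Suc i))"
    using assms by (simp_all add: inf_path_def)
  then show "(untag \<circ> f) i \<in> edges E \<and> rng E ((untag \<circ> f) i) = src E ((untag \<circ> f) (Suc i))"
    by auto
qed

lemma untag_shift:
  "map_bpath untag untag (shift (quot_graph E H) x) = shift E (map_bpath untag untag x)"
  by (cases "(quot_graph E H, x)" rule: shift.cases) (auto simp: comp_def)

lemma untag_path_in_boundary:
  assumes "hereditary E H" "saturated E H" "q \<in> boundary (quot_graph E H)"
  shows "map_bpath untag untag q \<in> boundary E \<and> \<not> enters E H (map_bpath untag untag q)"
proof (cases q)
  case (PV x)
  then show ?thesis
    using assms(3) singular_quot_untag[OF assms(1,2)] by (auto simp: boundary_def)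
next
  case (PF es)
  then have path: "fin_path (quot_graph E H) es"
    and last_sing: "singular (quot_graph E H) (rng (quot_graph E H) (last es))"
    using assms(3) by (auto simp: boundary_def)
  have "rng E (last (map untag es)) = untag (rng (quot_graph E H) (last es))"
    using path by (metis fin_path_Nil last_map untag_rng_quot)
  then show ?thesis
    using PF fin_path_untag[OF path] singular_quot_untag[OF assms(1,2) last_sing]
    by (auto simp: boundary_def)
next
  case (PI f)
  then have path: "inf_path (quot_graph E H) f"
    using assms(3) by (auto simp: boundary_def)
  then have "src E (untag (f i)) \<notin> H" for i
    using edge_quot_untag_notin(2)[OF assms(1)] unfolding inf_path_def by blast
  then show ?thesis
    using PI inf_path_untag[OF path] by (auto simp: boundary_def)
qed

definition tag_edge :: "('v, 'e) dgraph \<Rightarrow> 'v set \<Rightarrow> 'e \<Rightarrow> 'e + 'e" where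
  "tag_edge E H e = (if rng E e \<in> breaking E H then Inr e else Inl e)"

text \<open>Inverse of \<^const>\<open>untag\<close> on boundary paths avoiding H: only the last edge of a
  finite path can be an edge f_e into a new vertex w_v.\<close>

fun tag_edges :: "('v, 'e) dgraph \<Rightarrow> 'v set \<Rightarrow> 'e list \<Rightarrow> ('e + 'e) list" where
  "tag_edges E H [] = []"
| "tag_edges E H [e] = [tag_edge E H e]"
| "tag_edges E H (e # e' # es) = Inl e # tag_edges E H (e' # es)"

fun tag_path :: "('v, 'e) dgraph \<Rightarrow> 'v set \<Rightarrow> ('v, 'e) bpath \<Rightarrow> ('v + 'v, 'e + 'e) bpath" where
  "tag_path E H (PV v) = PV (if v \<in> breaking E H then Inr v else Inl v)"
| "tag_path E H (PF es) = PF (tag_edges E H es)"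
| "tag_path E H (PI f) = PI (Inl \<circ> f)"

lemma tag_edges_untag:
  assumes "hereditary E H" "saturated E H"
  shows "fin_path (quot_graph E H) es \<Longrightarrow> singular (quot_graph E H) (rng (quot_graph E H) (last es))
           \<Longrightarrow> tag_edges E H (map untag es) = es"
proof (induction es rule: induct_list012)
  case (2 x)
  then show ?case
    using singular_quot_Inl[OF assms] by (cases x) (auto simp: tag_edge_def)
qed auto

lemma tag_untag_path:
  assumes "hereditary E H" "saturated E H" "q \<in> boundary (quot_graph E H)"
  shows "tag_path E H (map_bpath untag untag q) = q"
proof (cases q)
  case (PV x)
  then show ?thesis
    using assms(3) singular_quot_Inl[OF assms(1,2)] by (cases x) (auto simp: boundary_def)
next
  case (PF es)
  then show ?thesis
    using assms(3) tag_edges_untag[OF assms(1,2)] by (auto simp: boundary_def)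
next
  case (PI f)
  then have "inf_path (quot_graph E H) f"
    using assms(3) by (auto simp: boundary_def)
  then have "rng (quot_graph E H) (f i) = src (quot_graph E H) (f (Suc i))" for i
    by (simp add: inf_path_def)
  then have "f i = Inl (untag (f i))" for i
    by (metis rng_quot_eq_Inl_iff quot_graph_simps(5) untag_simps(1))
  then show ?thesis
    using PI by (auto simp: fun_eq_iff)
qed

lemma untag_tag_edges [simp]: "map untag (tag_edges E H es) = es"
  by (induction E H es rule: tag_edges.induct) (auto simp: tag_edge_def)

lemma tag_edges_eq_Nil_iff [simp]: "tag_edges E H es = [] \<longleftrightarrow> es = []"
  by (induction E H es rule: tag_edges.induct) auto

lemma last_tag_edges: "es \<noteq> [] \<Longrightarrow> last (tag_edges E H es) = tag_edge E H (last es)"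
  by (induction E H es rule: tag_edges.induct) auto

lemma fin_path_tag_edges:
  "fin_path E es \<Longrightarrow> \<forall>e\<in>set es. rng E e \<notin> H \<Longrightarrow> fin_path (quot_graph E H) (tag_edges E H es)"
proof (induction es rule: induct_list012)
  case (3 e e' es)
  obtain x xs where "tag_edges E H (e' # es) = x # xs" "untag x = e'"
    by (cases es) (auto simp: tag_edge_def)
  then show ?case
    using 3 by auto
qed (auto simp: tag_edge_def)

lemma singular_quot_tag_edge:
  assumes "hereditary E H" "saturated E H" "singular E (rng E e)" "rng E e \<notin> H"
  shows "singular (quot_graph E H) (rng (quot_graph E H) (tag_edge E H e))"
  using assms singular_quot_Inl[OF assms(1,2)] by (auto simp: tag_edge_def singular_def[of E])

lemma tag_path_in_boundary:
  assumes "hereditary E H" "saturated E H" "a \<in> boundary E" "\<not> enters E H a"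
  shows "tag_path E H a \<in> boundary (quot_graph E H) \<and> map_bpath untag untag (tag_path E H a) = a"
proof (cases a)
  case (PV v)
  then show ?thesis
    using assms singular_quot_Inl[OF assms(1,2)] by (auto simp: boundary_def singular_def[of E])
next
  case (PF es)
  then have "fin_path E es" and es_last: "singular E (rng E (last es))" "rng E (last es) \<notin> H"
    using assms(3,4) by (auto simp: boundary_def)
  then have "fin_path (quot_graph E H) (tag_edges E H es)"
    using fin_path_tag_edges hereditary_fin_path_rng_notin[OF assms(1)] by blast
  moreover have "singular (quot_graph E H) (rng (quot_graph E H) (last (tag_edges E H es)))"
    using \<open>fin_path E es\<close> singular_quot_tag_edge[OF assms(1,2) es_last]
    by (metis fin_path_Nil last_tag_edges)
  ultimately show ?thesis
    using PF by (auto simp: boundary_def)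
next
  case (PI f)
  then have "inf_path (quot_graph E H) (Inl \<circ> f)"
    using assms(3,4) by (auto simp: boundary_def inf_path_def)
  then show ?thesis
    using PI by (auto simp: boundary_def comp_def)
qed

lemma quot_graph_classes_eqpoll:
  assumes "hereditary E H" "saturated E H"
  shows "boundary_classes (quot_graph E H) \<approx> {a \<in> boundary E. \<not> enters E H a} // shift_tail E"
  unfolding boundary_classes_def
proof (rule quotient_eqpoll_quotient[where g = "map_bpath untag untag", OF equiv_shift_tail equiv_shift_tail])
  let ?Q = "quot_graph E H" and ?u = "map_bpath untag untag"
  show "{a \<in> boundary E. \<not> enters E H a} \<subseteq> boundary E"
    by blast
  show "?u ` boundary ?Q \<subseteq> {a \<in> boundary E. \<not> enters E H a}"
    using untag_path_in_boundary[OF assms] by blast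
  have "inj_on ?u (boundary ?Q)"
    using tag_untag_path[OF assms] by (rule inj_on_inverseI)
  then show "(?u b, ?u b') \<in> shift_tail E \<longleftrightarrow> (b, b') \<in> shift_tail ?Q"
    if "b \<in> boundary ?Q" "b' \<in> boundary ?Q" for b b'
    using shift_tail_transfer[where h = ?u, OF untag_shift] untag_path_in_boundary[OF assms] that by blast
  show "\<exists>b\<in>boundary ?Q. (?u b, a) \<in> shift_tail E"
    if "a \<in> {a \<in> boundary E. \<not> enters E H a}" for a
  proof -
    have "tag_path E H a \<in> boundary ?Q" "?u (tag_path E H a) = a"
      using tag_path_in_boundary[OF assms] that by auto
    moreover have "(a, a) \<in> shift_tail E"
      using shift_tail_funpow_shift[of a E 0] that by simp
    ultimately show ?thesis
      by metis
  qed
qed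

section \<open>The graph E-bar\<close>

lemma restr_graph_simps [simp]:
  "verts (restr_graph E H) = Inl ` H \<union> Inr ` F1 E H"
  "edges (restr_graph E H) = Inl ` {e \<in> edges E. src E e \<in> H} \<union> Inr ` F1 E H"
  "rng (restr_graph E H) (Inl e) = Inl (rng E e)"
  "rng (restr_graph E H) (Inr \<alpha>) = Inl (rng E (last \<alpha>))"
  "src (restr_graph E H) (Inl e) = Inl (src E e)"
  "src (restr_graph E H) (Inr \<alpha>) = Inr \<alpha>"
  by (simp_all add: restr_graph_def)

lemma map_bpath_projl_Inl [simp]: "map_bpath projl projl (map_bpath Inl Inl c) = c"
  by (simp add: bpath.map_comp comp_def bpath.map_ident)

lemma shift_restr_map_Inl:
  "shift (restr_graph E H) (map_bpath Inl Inl c) = map_bpath Inl Inl (shift E c)"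
  by (cases "(E, c)" rule: shift.cases) (auto simp: comp_def)

lemma singular_restr_Inl:
  assumes "hereditary E H"
  shows "singular (restr_graph E H) (Inl v) \<longleftrightarrow> v \<in> H \<and> singular E v"
proof -
  have "emits (restr_graph E H) (Inl v) = Inl ` emits E v" and "v \<in> verts E" if "v \<in> H"
    using that assms by (auto simp: emits_def hereditary_def)
  then show ?thesis
    by (auto simp: singular_def finite_image_iff)
qed

lemma not_singular_restr_Inr: "\<not> singular (restr_graph E H) (Inr \<alpha>)"
proof
  assume sing: "singular (restr_graph E H) (Inr \<alpha>)"
  then have "\<alpha> \<in> F1 E H"
    by (auto simp: singular_def)
  then have "emits (restr_graph E H) (Inr \<alpha>) = {Inr \<alpha>}"
    by (auto simp: emits_def)
  then show False
    using sing by (simp add: singular_def)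
qed

lemma fin_path_restr_map_Inl:
  "fin_path (restr_graph E H) (map Inl es) \<longleftrightarrow> fin_path E es \<and> (\<forall>e\<in>set es. src E e \<in> H)"
  unfolding fin_path_def by auto

lemma inf_path_restr_Inl:
  "inf_path (restr_graph E H) (Inl \<circ> f) \<longleftrightarrow> inf_path E f \<and> (\<forall>i. src E (f i) \<in> H)"
  unfolding inf_path_def by auto

lemma boundary_restr_map_InlD:
  assumes "hereditary E H" "map_bpath Inl Inl c \<in> boundary (restr_graph E H)"
  shows "c \<in> boundary E \<and> enters E H c"
proof (cases c)
  case (PF es)
  then have path: "fin_path E es" "\<forall>e\<in>set es. src E e \<in> H"
    and "singular (restr_graph E H) (rng (restr_graph E H) (last (map Inl es)))"
    using assms(2) by (auto simp: boundary_def fin_path_restr_map_Inl)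
  moreover have "rng (restr_graph E H) (last (map Inl es)) = Inl (rng E (last es))"
    using path by (metis fin_path_Nil last_map restr_graph_simps(3))
  ultimately show ?thesis
    using PF by (simp add: boundary_def singular_restr_Inl[OF assms(1)])
qed (use assms in \<open>auto simp: boundary_def singular_restr_Inl inf_path_restr_Inl\<close>)

lemma isl_if_adjacent_restr: "rng (restr_graph E H) x = src (restr_graph E H) y \<Longrightarrow> isl y"
  by (cases x; cases y) simp_all

text \<open>Vertices of \<^const>\<open>F1\<close> receive no edges, so a new edge alpha-bar can only be
  the first edge of a path.\<close>

lemma isl_tail_fin_path_restr:
  assumes "fin_path (restr_graph E H) (e # es)" "y \<in> set es"
  shows "isl y"
proof -
  obtain i where "i < length es" "es ! i = y"
    using assms(2) by (meson in_set_conv_nth)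
  then have "rng (restr_graph E H) ((e # es) ! i) = src (restr_graph E H) y"
    using assms(1) unfolding fin_path_def by (metis Suc_less_eq length_Cons nth_Cons_Suc)
  then show ?thesis
    by (rule isl_if_adjacent_restr)
qed

lemma shift_boundary_restr_Inl:
  assumes "b \<in> boundary (restr_graph E H)"
  shows "\<exists>c. shift (restr_graph E H) b = map_bpath Inl Inl c"
proof (cases "(restr_graph E H, b)" rule: shift.cases)
  case (1 R x)
  then have "isl x"
    using assms not_singular_restr_Inr by (cases x) (auto simp: boundary_def)
  then have "shift (restr_graph E H) b = map_bpath Inl Inl (PV (projl x))"
    using 1 by simp
  then show ?thesis ..
next
  case (2 R)
  then have "shift (restr_graph E H) b = map_bpath Inl Inl (PF [])"
    by simp
  then show ?thesis ..
next
  case (3 R e)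
  have "isl (rng (restr_graph E H) e)"
    by (cases e) simp_all
  then have "shift (restr_graph E H) b = map_bpath Inl Inl (PV (projl (rng (restr_graph E H) e)))"
    using 3 by simp
  then show ?thesis ..
next
  case (4 R e e' es)
  then have path: "fin_path (restr_graph E H) (e # e' # es)"
    using assms by (simp add: boundary_def)
  have "isl y" if "y \<in> set (e' # es)" for y
    using path that by (rule isl_tail_fin_path_restr)
  then have "shift (restr_graph E H) b = map_bpath Inl Inl (PF (map projl (e' # es)))"
    using 4 by (simp add: map_idI)
  then show ?thesis ..
next
  case (5 R f)
  have "isl (f (Suc i))" for i
    using assms 5 isl_if_adjacent_restr by (fastforce simp: boundary_def inf_path_def)
  then have "shift (restr_graph E H) b = map_bpath Inl Inl (PI (\<lambda>i. projl (f (Suc i))))"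
    using 5 by (simp add: comp_def)
  then show ?thesis ..
qed

lemma enters_funpow_shift_in_boundary_restr:
  assumes her: "hereditary E H" and "a \<in> boundary E" "enters E H a"
  shows "\<exists>k. map_bpath Inl Inl ((shift E ^^ k) a) \<in> boundary (restr_graph E H)"
proof (cases a)
  case (PV v)
  then have "map_bpath Inl Inl ((shift E ^^ 0) a) \<in> boundary (restr_graph E H)"
    using assms by (auto simp: boundary_def singular_restr_Inl[OF her])
  then show ?thesis ..
next
  case (PF es)
  then have "es \<noteq> []" "singular E (rng E (last es))" "rng E (last es) \<in> H"
    using assms by (auto simp: boundary_def)
  then have "map_bpath Inl Inl ((shift E ^^ length es) a) \<in> boundary (restr_graph E H)"
    using PF by (simp add: funpow_shift_PF_length boundary_def singular_restr_Inl[OF her])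
  then show ?thesis ..
next
  case (PI f)
  then have path: "inf_path E f"
    using assms by (auto simp: boundary_def)
  obtain i where "src E (f i) \<in> H"
    using PI assms by auto
  then have "src E (f (j + i)) \<in> H" for j
    using path her by (induction j) (auto simp: inf_path_def hereditary_def)
  then have "inf_path (restr_graph E H) (Inl \<circ> (\<lambda>j. f (j + i)))"
    using path by (auto simp: inf_path_restr_Inl inf_path_def)
  then have "map_bpath Inl Inl ((shift E ^^ i) a) \<in> boundary (restr_graph E H)"
    using PI by (simp add: funpow_shift_PI boundary_def)
  then show ?thesis ..
qed

lemma shift_boundary_restr:
  assumes "hereditary E H" "b \<in> boundary (restr_graph E H)"
  shows "map_bpath Inl Inl (map_bpath projl projl (shift (restr_graph E H) b)) = shift (restr_graph E H) b
    \<and> map_bpath projl projl (shift (restr_graph E H) b) \<in> boundary E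
    \<and> enters E H (map_bpath projl projl (shift (restr_graph E H) b))"
proof -
  obtain c where "shift (restr_graph E H) b = map_bpath Inl Inl c"
    using shift_boundary_restr_Inl[OF assms(2)] by blast
  moreover have "shift (restr_graph E H) b \<in> boundary (restr_graph E H)"
    using shift_in_boundary[OF assms(2)] .
  ultimately show ?thesis
    using boundary_restr_map_InlD[OF assms(1)] by simp
qed

lemma shift_tail_restr_map_Inl_iff:
  assumes "c \<in> boundary E" "map_bpath Inl Inl c \<in> boundary (restr_graph E H)"
    and "c' \<in> boundary E" "map_bpath Inl Inl c' \<in> boundary (restr_graph E H)"
  shows "(map_bpath Inl Inl c, map_bpath Inl Inl c') \<in> shift_tail (restr_graph E H) \<longleftrightarrow>
           (c, c') \<in> shift_tail E"
proof (rule shift_tail_transfer[where h = "map_bpath Inl Inl", OF shift_restr_map_Inl[symmetric]])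
  show "inj_on (map_bpath Inl Inl) (boundary E)"
    by (rule inj_on_inverseI[where g = "map_bpath projl projl"]) simp
qed (fact assms)+

lemma restr_graph_classes_eqpoll:
  assumes "hereditary E H"
  shows "boundary_classes (restr_graph E H) \<approx> {a \<in> boundary E. enters E H a} // shift_tail E"
  unfolding boundary_classes_def
proof (rule quotient_eqpoll_quotient[where g = "\<lambda>b. map_bpath projl projl (shift (restr_graph E H) b)",
      OF equiv_shift_tail equiv_shift_tail])
  let ?R = "restr_graph E H" and ?i = "map_bpath Inl Inl"
  let ?g = "\<lambda>b. map_bpath projl projl (shift ?R b)"
  note g = shift_boundary_restr[OF assms]
  show "{a \<in> boundary E. enters E H a} \<subseteq> boundary E"
    by blast
  show "?g ` boundary ?R \<subseteq> {a \<in> boundary E. enters E H a}"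
    using g by blast
  show "(?g b, ?g b') \<in> shift_tail E \<longleftrightarrow> (b, b') \<in> shift_tail ?R"
    if "b \<in> boundary ?R" "b' \<in> boundary ?R" for b b'
  proof -
    note gb = g[OF that(1)] and gb' = g[OF that(2)]
    have "(b, b') \<in> shift_tail ?R \<longleftrightarrow> (shift ?R b, shift ?R b') \<in> shift_tail ?R"
      using shift_tail_shift_iff[OF that] by simp
    also have "\<dots> \<longleftrightarrow> (?i (?g b), ?i (?g b')) \<in> shift_tail ?R"
      using gb gb' by simp
    also have "\<dots> \<longleftrightarrow> (?g b, ?g b') \<in> shift_tail E"
      using gb gb' shift_in_boundary[OF that(1)] shift_in_boundary[OF that(2)]
      by (intro shift_tail_restr_map_Inl_iff) simp_all
    finally show ?thesis
      by blast
  qed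
  show "\<exists>b\<in>boundary ?R. (?g b, a) \<in> shift_tail E"
    if a: "a \<in> {a \<in> boundary E. enters E H a}" for a
  proof -
    obtain k where k: "?i ((shift E ^^ k) a) \<in> boundary ?R"
      using enters_funpow_shift_in_boundary_restr[OF assms] a by blast
    have "?g (?i ((shift E ^^ k) a)) = (shift E ^^ Suc k) a"
      by (simp add: shift_restr_map_Inl)
    moreover have "((shift E ^^ Suc k) a, a) \<in> shift_tail E"
      using shift_tail_funpow_shift a by blast
    ultimately show ?thesis
      using k by metis
  qed
qed

theorem lemma6p2:
  fixes E :: "('v, 'e) dgraph" and H :: "'v set"
  assumes "wf_graph E"
    and "hereditary E H"
    and "saturated E H"
  shows "boundary_classes E \<approx>
           boundary_classes (restr_graph E H) <+> boundary_classes (quot_graph E H)"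
proof -
  have "boundary_classes E \<approx>
      {a \<in> boundary E. enters E H a} // shift_tail E <+> {a \<in> boundary E. \<not> enters E H a} // shift_tail E"
    using assms(2) by (rule boundary_classes_split)
  also have "\<dots> \<approx> boundary_classes (restr_graph E H) <+> boundary_classes (quot_graph E H)"
    using sum_eqpoll_cong[OF eqpoll_sym[OF restr_graph_classes_eqpoll[OF assms(2)]]
        eqpoll_sym[OF quot_graph_classes_eqpoll[OF assms(2,3)]]] .
  finally show ?thesis .
qed

end
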